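(* Let $\Omega$ be a finite set, let $\mathcal K$ be a finite nonempty set of gambles on $\Omega$, and let $\underline{P}_{\mathcal K}$ be a coherent lower prevision on $\mathcal K$. Let $\mathcal M=\{P: P(f)\ge\underline{P}_{\mathcal K}(f)\ \forall f\in\mathcal K\}$ be its credal set and $\underline{E}(h)=\min_{P\in\mathcal M}P(h)$ its natural extension. For $f\in\mathcal K$ let $\mathcal M_f=\{P\in\mathcal M: P(f)=\underline{E}(f)\}$ and let $\mathcal E_f$ be the set of extreme points of $\mathcal M_f$. Let $\underline{P}$ and $\underline{P}'$ be two coherent lower previsions on the set of all gambles, both agreeing with $\underline{P}_{\mathcal K}$ on $\mathcal K$. Then for every gamble $h$, $$|\underline{P}(h)-\underline{P}'(h)|\le\min_{f\in\mathcal K}\max_{E\in\mathcal E_f}E(h)-\underline{E}(h).$$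
   Context: Gambles are real-valued functions on the finite set $\Omega$. A linear prevision is the expectation functional $P(f)=\sum_{x}p(x)f(x)$ of a probability mass vector $p$. A lower prevision $\underline{P}$ on a set of gambles $\mathcal H$ is coherent if there is a nonempty closed convex set $\mathcal C$ of linear previsions with $\underline{P}(f)=\min_{P\in\mathcal C}P(f)$ for all $f\in\mathcal H$. *)

theory Defs
  imports "HOL-Analysis.Analysis"
begin

text \<open>Gambles on the finite set \<Omega> (a finite type 'a) are functions 'a \<Rightarrow> real.
  Linear previsions are represented by their probability mass vectors p :: real^'a.\<close>

definition pmass :: "(real^'a::finite) set" where
  "pmass = {p. (\<forall>x. 0 \<le> p $ x) \<and> (\<Sum>x\<in>UNIV. p $ x) = 1}"

definition prev :: "real^'a::finite \<Rightarrow> ('a \<Rightarrow> real) \<Rightarrow> real" where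
  "prev p f = (\<Sum>x\<in>UNIV. p $ x * f x)"

text \<open>Coherence: lower envelope (attained minimum) on H of a nonempty closed convex set of
  linear previsions.\<close>
definition coherent_on :: "('a::finite \<Rightarrow> real) set \<Rightarrow> (('a \<Rightarrow> real) \<Rightarrow> real) \<Rightarrow> bool" where
  "coherent_on H LP \<longleftrightarrow> (\<exists>C. C \<subseteq> pmass \<and> C \<noteq> {} \<and> closed C \<and> convex C \<and>
      (\<forall>f\<in>H. (\<forall>p\<in>C. LP f \<le> prev p f) \<and> (\<exists>p\<in>C. prev p f = LP f)))"

definition credal :: "('a::finite \<Rightarrow> real) set \<Rightarrow> (('a \<Rightarrow> real) \<Rightarrow> real) \<Rightarrow> (real^'a) set" where
  "credal K PK = {p\<in>pmass. \<forall>f\<in>K. prev p f \<ge> PK f}"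

definition natext :: "('a::finite \<Rightarrow> real) set \<Rightarrow> (('a \<Rightarrow> real) \<Rightarrow> real) \<Rightarrow> ('a \<Rightarrow> real) \<Rightarrow> real" where
  "natext K PK h = Inf ((\<lambda>p. prev p h) ` credal K PK)"

definition face_at :: "('a::finite \<Rightarrow> real) set \<Rightarrow> (('a \<Rightarrow> real) \<Rightarrow> real) \<Rightarrow> ('a \<Rightarrow> real) \<Rightarrow> (real^'a) set" where
  "face_at K PK f = {p\<in>credal K PK. prev p f = natext K PK f}"

definition extreme_pts :: "('a::finite \<Rightarrow> real) set \<Rightarrow> (('a \<Rightarrow> real) \<Rightarrow> real) \<Rightarrow> ('a \<Rightarrow> real) \<Rightarrow> (real^'a) set" where
  "extreme_pts K PK f = {p. p extreme_point_of face_at K PK f}"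

end

theory Submission
  imports Defs
begin

text \<open>Both extensions are lower envelopes of credal sets contained in the credal set of
  \<open>PK\<close>, so neither drops below the natural extension. Conversely, for \<open>f \<in> K\<close> the envelope of
  an extension is attained at \<open>f\<close> by some mass vector, which then lies in the face \<open>face_at K PK f\<close>;
  by Krein--Milman the linear functional \<open>p \<mapsto> prev p h\<close> is bounded on that compact convex face
  by its supremum over the extreme points. Hence both values lie in one interval whose length
  is the right-hand side.\<close>

lemma linear_prev: "linear (\<lambda>p. prev p h)"
  unfolding prev_def by (intro linearI) (simp_all add: algebra_simps sum.distrib sum_distrib_left)

lemma continuous_on_prev: "continuous_on S (\<lambda>p. prev p h)"
  using linear_prev by (intro linear_continuous_on) (simp add: linear_conv_bounded_linear)

lemma le_Sup_extreme_points:
  fixes l :: "'a::euclidean_space \<Rightarrow> real"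
  assumes "compact S" "convex S" "linear l" "p \<in> S"
  shows "l p \<le> Sup (l ` {x. x extreme_point_of S})"
proof -
  let ?b = "Sup (l ` {x. x extreme_point_of S})"
  have "compact (l ` S)"
    using assms(1,3) by (intro compact_continuous_image linear_continuous_on)
      (simp add: linear_conv_bounded_linear)
  then have "bdd_above (l ` {x. x extreme_point_of S})"
    by (rule bdd_above_mono[OF bounded_imp_bdd_above[OF compact_imp_bounded]])
      (auto simp: extreme_point_of_def)
  then have "{x. x extreme_point_of S} \<subseteq> l -` {..?b}"
    by (auto intro: cSup_upper)
  moreover have "convex (l -` {..?b})"
    using assms(3) by (intro convex_linear_vimage convex_real_interval)
  ultimately have "convex hull {x. x extreme_point_of S} \<subseteq> l -` {..?b}"
    by (rule hull_minimal)
  with Krein_Milman_Minkowski[OF assms(1,2)] assms(4) show ?thesis by auto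
qed

lemma closed_pmass: "closed (pmass :: (real^'a::finite) set)"
proof -
  have "pmass = (\<Inter>x. {p::real^'a. 0 \<le> p $ x}) \<inter> {p. (\<Sum>x\<in>UNIV. p $ x) = 1}"
    unfolding pmass_def by auto
  moreover have "closed {p::real^'a. 0 \<le> p $ x}" for x
    by (intro closed_Collect_le continuous_intros)
  moreover have "closed {p::real^'a. (\<Sum>x\<in>UNIV. p $ x) = 1}"
    by (intro closed_Collect_eq continuous_intros)
  ultimately show ?thesis by (metis closed_INT closed_Int)
qed

lemma bounded_pmass: "bounded (pmass :: (real^'a::finite) set)"
proof -
  have "norm p \<le> 1" if "p \<in> pmass" for p :: "real^'a"
  proof -
    have "norm p \<le> (\<Sum>i\<in>UNIV. \<bar>p $ i\<bar>)" by (rule norm_le_l1_cart)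
    also have "\<dots> = 1" using that unfolding pmass_def by simp
    finally show ?thesis .
  qed
  then show ?thesis unfolding bounded_iff by blast
qed

lemma convex_pmass: "convex (pmass :: (real^'a::finite) set)"
  unfolding convex_def pmass_def by (auto simp: sum.distrib sum_distrib_left[symmetric])

lemma credal_eq: "credal K PK = pmass \<inter> (\<Inter>f\<in>K. (\<lambda>p. prev p f) -` {PK f..})"
  unfolding credal_def by auto

lemma convex_credal: "convex (credal K PK)"
  unfolding credal_eq
  by (intro convex_Int convex_pmass convex_INT ballI convex_linear_vimage linear_prev
      convex_real_interval)

lemma compact_credal: "compact (credal K PK)"
proof -
  have "closed ((\<lambda>p. prev p f) -` {PK f..} :: (real^'a) set)" for f :: "'a \<Rightarrow> real"
    by (intro closed_vimage continuous_on_prev closed_real_atLeast)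
  then have "closed (credal K PK)"
    unfolding credal_eq by (intro closed_Int closed_pmass closed_INT) auto
  moreover have "bounded (credal K PK)"
    by (rule bounded_subset[OF bounded_pmass]) (auto simp: credal_def)
  ultimately show ?thesis by (simp add: compact_eq_bounded_closed)
qed

lemma face_at_eq: "face_at K PK f = credal K PK \<inter> (\<lambda>p. prev p f) -` {natext K PK f}"
  unfolding face_at_def by auto

lemma convex_face_at: "convex (face_at K PK f)"
  unfolding face_at_eq
  by (intro convex_Int convex_credal convex_linear_vimage linear_prev convex_singleton)

lemma compact_face_at: "compact (face_at K PK f)"
proof -
  have "closed ((\<lambda>p. prev p f) -` {natext K PK f} :: (real^'a) set)"
    by (intro closed_vimage continuous_on_prev closed_singleton)
  then show ?thesis
    unfolding face_at_eq by (intro compact_Int_closed compact_credal)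
qed

lemma natext_le_prev:
  assumes "p \<in> credal K PK"
  shows "natext K PK h \<le> prev p h"
proof -
  have "bdd_below ((\<lambda>p. prev p h) ` credal K PK)"
    using compact_continuous_image[OF continuous_on_prev compact_credal]
    by (intro bounded_imp_bdd_below compact_imp_bounded)
  then show ?thesis
    unfolding natext_def using assms by (intro cInf_lower) auto
qed

lemma natext_eq_coherent:
  assumes "coherent_on K PK" "f \<in> K"
  shows "natext K PK f = PK f"
proof -
  obtain C where C: "C \<subseteq> pmass"
    "\<forall>f\<in>K. (\<forall>p\<in>C. PK f \<le> prev p f) \<and> (\<exists>p\<in>C. prev p f = PK f)"
    using assms(1) unfolding coherent_on_def by blast
  then have C_credal: "C \<subseteq> credal K PK"
    unfolding credal_def by blast
  obtain q where q: "q \<in> C" "prev q f = PK f"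
    using C(2) assms(2) by blast
  show ?thesis
  proof (rule antisym)
    show "natext K PK f \<le> PK f"
      using natext_le_prev[of q K PK f] q C_credal by auto
    show "PK f \<le> natext K PK f"
      unfolding natext_def using q C_credal assms(2)
      by (intro cINF_greatest) (auto simp: credal_def)
  qed
qed

lemma coherent_extension_credal:
  assumes "coherent_on UNIV LP" "\<forall>f\<in>K. LP f = PK f"
  obtains C where "C \<subseteq> credal K PK" "\<And>g p. p \<in> C \<Longrightarrow> LP g \<le> prev p g"
    "\<And>g. \<exists>p\<in>C. prev p g = LP g"
proof -
  obtain C where C: "C \<subseteq> pmass" "\<forall>g. (\<forall>p\<in>C. LP g \<le> prev p g) \<and> (\<exists>p\<in>C. prev p g = LP g)"
    using assms(1) unfolding coherent_on_def by blast
  moreover have "C \<subseteq> credal K PK"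
  proof
    fix p assume "p \<in> C"
    then have "PK f \<le> prev p f" if "f \<in> K" for f
      using C(2) assms(2) that by metis
    then show "p \<in> credal K PK"
      using C(1) \<open>p \<in> C\<close> unfolding credal_def by blast
  qed
  ultimately show ?thesis
    using that by blast
qed

lemma natext_le_coherent_extension:
  assumes "coherent_on UNIV LP" "\<forall>f\<in>K. LP f = PK f"
  shows "natext K PK h \<le> LP h"
proof -
  obtain C where "C \<subseteq> credal K PK" "\<And>g. \<exists>p\<in>C. prev p g = LP g"
    using coherent_extension_credal[OF assms] by metis
  then obtain p where "p \<in> credal K PK" "prev p h = LP h"
    by blast
  then show ?thesis
    using natext_le_prev by metis
qed

lemma coherent_extension_le_Sup_extreme_pts:
  assumes "coherent_on K PK" "coherent_on UNIV LP" "\<forall>f\<in>K. LP f = PK f" "f \<in> K"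
  shows "LP h \<le> Sup ((\<lambda>E. prev E h) ` extreme_pts K PK f)"
proof -
  obtain C where C: "C \<subseteq> credal K PK" "\<And>g p. p \<in> C \<Longrightarrow> LP g \<le> prev p g"
    "\<And>g. \<exists>p\<in>C. prev p g = LP g"
    using coherent_extension_credal[OF assms(2,3)] by metis
  then obtain q where q: "q \<in> C" "prev q f = LP f"
    by blast
  have "q \<in> face_at K PK f"
    using q C(1) assms(3,4) natext_eq_coherent[OF assms(1,4)] unfolding face_at_def by auto
  then have "prev q h \<le> Sup ((\<lambda>E. prev E h) ` extreme_pts K PK f)"
    unfolding extreme_pts_def
    by (rule le_Sup_extreme_points[OF compact_face_at convex_face_at linear_prev])
  moreover have "LP h \<le> prev q h"
    using C(2) q(1) .
  ultimately show ?thesis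
    by linarith
qed

theorem corollary6:
  fixes K :: "('a::finite \<Rightarrow> real) set"
    and PK LP LP' :: "('a \<Rightarrow> real) \<Rightarrow> real"
  assumes "finite K" and "K \<noteq> {}"
    and "coherent_on K PK"
    and "coherent_on UNIV LP" and "coherent_on UNIV LP'"
    and "\<forall>f\<in>K. LP f = PK f" and "\<forall>f\<in>K. LP' f = PK f"
  shows "\<bar>LP h - LP' h\<bar> \<le>
    Min ((\<lambda>f. Sup ((\<lambda>E. prev E h) ` extreme_pts K PK f)) ` K) - natext K PK h"
proof -
  let ?upper = "Min ((\<lambda>f. Sup ((\<lambda>E. prev E h) ` extreme_pts K PK f)) ` K)"
  have "natext K PK h \<le> LP h" "natext K PK h \<le> LP' h"
    using natext_le_coherent_extension assms(4-7) by metis+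
  moreover have "LP h \<le> ?upper" "LP' h \<le> ?upper"
    using assms(1,2) coherent_extension_le_Sup_extreme_pts[OF assms(3,4,6)]
      coherent_extension_le_Sup_extreme_pts[OF assms(3,5,7)]
    by (simp_all add: Min_ge_iff)
  ultimately show ?thesis
    by linarith
qed

end
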